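(* Let $\mathcal{G}$ be a MAG with vertices $[n]=\{1,\dots,n\}$ numbered in a topological order. For each $i$, let $\tilde{\mathbb{L}}_i$ consist of (a) the independence $i\perp [i-1]\setminus\mathrm{mb}(i,[i])\mid \mathrm{mb}(i,[i])$, and (b) for every head $H'$ with maximal element $i$ other than the maximal head $\mathrm{barren}_{\mathcal{G}_{[i]}}(\mathrm{dis}_{[i]}(i))$, the independence associated with the edge $H^*\to^{k}H'$, where $k=\min\mathrm{ceil}(\mathrm{ham}(H'))$ and $H^*$ is the maximum, in the partial order on heads, of the set of parent heads $H$ of $H'$ in the complete power DAG with $H\to^{k}H'$. Then the collection $\tilde{\mathbb{L}}=\bigcup_i\tilde{\mathbb{L}}_i$ is equivalent to the collection of independences given by the ordered local Markov property for $\mathcal{G}$ (each collection can be derived from the other using the semi-graphoid axioms).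
   Context: A MAG is an acyclic directed mixed graph (directed and bidirected edges, no directed cycles) with $\mathrm{sib}(v)\cap\mathrm{an}(v)=\emptyset$ for all $v$ and in which every nonadjacent pair is m-separated by some set. $[i]=\{1,\dots,i\}$; the numbering is topological (ancestors have smaller labels). For $W\subseteq V$, $\mathcal{G}_W$ is the induced subgraph and $\mathrm{dis}_W(v)$ the district (bidirected-connected component) of $v$ in $\mathcal{G}_W$. A set $A$ is ancestral if $\mathrm{an}(A)=A$; for ancestral $A$ and $v\in A$ with no child in $A$, the Markov blanket is $\mathrm{mb}(v,A)=\bigl(\mathrm{pa}_{\mathcal{G}_A}(\mathrm{dis}_A(v))\cup\mathrm{dis}_A(v)\bigr)\setminus\{v\}$. The ordered local Markov property is the collection of independences $v\perp A\setminus(\mathrm{mb}(v,A)\cup\{v\})\mid\mathrm{mb}(v,A)$ for all ancestral $A$ and all $v\in A$ with no child in $A$. $\mathrm{barren}_{\mathcal{G}'}(W)=\{w\in W:\mathrm{de}_{\mathcal{G}'}(w)\cap W=\{w\}\}$; a nonempty $H$ is a head if $\mathrm{barren}(H)=H$ and $H$ lies in one district of $\mathcal{G}_{\mathrm{an}(H)}$; $\mathrm{tail}(H)=(\mathrm{dis}_{\mathrm{an}(H)}(H)\setminus H)\cup\mathrm{pa}(\mathrm{dis}_{\mathrm{an}(H)}(H))$. For a head $H$ with maximal element $i$ and $\emptyset\ne K\subseteq H\setminus\{i\}$, write $H\to^K H'$ if $H'=\mathrm{barren}_{\mathcal{G}'}(\mathrm{dis}_{\mathcal{G}'}(i))$ with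 $\mathcal{G}'=\mathcal{G}_{\mathrm{an}(H)\setminus K}$ ($H'$ is again a head with maximal element $i$); the independence associated with it is $i\perp (H\cup T)\setminus(H'\cup T'\cup K)\mid (H'\cup T')\setminus\{i\}$ with $T=\mathrm{tail}(H)$, $T'=\mathrm{tail}(H')$. The complete power DAG for $i$ has as nodes the heads with maximal element $i$, and $H$ is a parent head of $H'$ if $H\to^{\{k\}}H'$ for some single vertex $k\in H\setminus\{i\}$ (written $H\to^k H'$). Heads with the same maximal element are partially ordered by $H\le H''$ iff $\mathrm{an}(H)\subseteq\mathrm{an}(H'')$. $\mathrm{ceil}(W)=\{w\in W:W\cap\mathrm{an}(w)=\{w\}\}$ and $\mathrm{ham}(H)=\mathrm{sib}(\mathrm{dis}_{\mathrm{an}(H)}(H))\setminus\mathrm{dis}_{\mathrm{an}(H)}(H)$. (The paper asserts that the maximum $H^*$ exists.) Semi-graphoid axioms: symmetry; decomposition $X\perp YW|Z\Rightarrow X\perp Y|Z$; weak union $X\perp YW|Z\Rightarrow X\perp W|YZ$; contraction $X\perp Y|Z\ \&\ X\perp W|YZ\Rightarrow X\perp YW|Z$. *)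

theory Defs
  imports Main
begin

text \<open>A mixed graph on vertex set {1..n} is given by a set D of directed edges
(a,b) meaning a \<rightarrow> b, and a symmetric set B of bidirected edges (a,b) meaning a \<leftrightarrow> b.
An independence statement X \<perp> Y | Z is a triple (X, Y, Z) of vertex sets.\<close>

type_synonym indep = "nat set \<times> nat set \<times> nat set"

definition adj :: "(nat \<times> nat) set \<Rightarrow> (nat \<times> nat) set \<Rightarrow> nat \<Rightarrow> nat \<Rightarrow> bool" where
  "adj D B a b \<longleftrightarrow> (a, b) \<in> D \<or> (b, a) \<in> D \<or> (a, b) \<in> B"

definition arrowhead :: "(nat \<times> nat) set \<Rightarrow> (nat \<times> nat) set \<Rightarrow> nat \<Rightarrow> nat \<Rightarrow> bool" where
  "arrowhead D B a b \<longleftrightarrow> (a, b) \<in> D \<or> (a, b) \<in> B"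

definition anc_in :: "(nat \<times> nat) set \<Rightarrow> nat set \<Rightarrow> nat set \<Rightarrow> nat set" where
  "anc_in D W S = {u \<in> W. \<exists>v \<in> S. (u, v) \<in> (D \<inter> (W \<times> W))\<^sup>*}"

definition an :: "(nat \<times> nat) set \<Rightarrow> nat set \<Rightarrow> nat set" where
  "an D S = {u. \<exists>v \<in> S. (u, v) \<in> D\<^sup>*}"

definition desc_in :: "(nat \<times> nat) set \<Rightarrow> nat set \<Rightarrow> nat \<Rightarrow> nat set" where
  "desc_in D W w = {u \<in> W. (w, u) \<in> (D \<inter> (W \<times> W))\<^sup>*}"

definition pa_in :: "(nat \<times> nat) set \<Rightarrow> nat set \<Rightarrow> nat set \<Rightarrow> nat set" where
  "pa_in D W S = {u \<in> W. \<exists>v \<in> S \<inter> W. (u, v) \<in> D}"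

definition pa :: "(nat \<times> nat) set \<Rightarrow> nat set \<Rightarrow> nat set" where
  "pa D S = {u. \<exists>v \<in> S. (u, v) \<in> D}"

definition sib :: "(nat \<times> nat) set \<Rightarrow> nat set \<Rightarrow> nat set" where
  "sib B S = {u. \<exists>v \<in> S. (u, v) \<in> B}"

definition dis_in :: "(nat \<times> nat) set \<Rightarrow> nat set \<Rightarrow> nat \<Rightarrow> nat set" where
  "dis_in B W v = {u \<in> W. (v, u) \<in> (B \<inter> (W \<times> W))\<^sup>*}"

definition dis_set :: "(nat \<times> nat) set \<Rightarrow> nat set \<Rightarrow> nat set \<Rightarrow> nat set" where
  "dis_set B W S = (\<Union>v \<in> S. dis_in B W v)"

definition barren_in :: "(nat \<times> nat) set \<Rightarrow> nat set \<Rightarrow> nat set \<Rightarrow> nat set" where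
  "barren_in D W S = {w \<in> S. desc_in D W w \<inter> S = {w}}"

definition m_connecting :: "(nat \<times> nat) set \<Rightarrow> (nat \<times> nat) set \<Rightarrow> nat set \<Rightarrow> nat list \<Rightarrow> bool" where
  "m_connecting D B Z xs \<longleftrightarrow>
     2 \<le> length xs \<and> distinct xs \<and>
     (\<forall>j. Suc j < length xs \<longrightarrow> adj D B (xs ! j) (xs ! Suc j)) \<and>
     (\<forall>j. 0 < j \<and> Suc j < length xs \<longrightarrow>
        (if arrowhead D B (xs ! (j - 1)) (xs ! j) \<and> arrowhead D B (xs ! Suc j) (xs ! j)
         then xs ! j \<in> an D Z else xs ! j \<notin> Z))"

definition m_separated :: "(nat \<times> nat) set \<Rightarrow> (nat \<times> nat) set \<Rightarrow> nat \<Rightarrow> nat \<Rightarrow> nat set \<Rightarrow> bool" where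
  "m_separated D B a b Z \<longleftrightarrow> a \<notin> Z \<and> b \<notin> Z \<and>
     \<not> (\<exists>xs. hd xs = a \<and> last xs = b \<and> m_connecting D B Z xs)"

definition is_MAG :: "nat \<Rightarrow> (nat \<times> nat) set \<Rightarrow> (nat \<times> nat) set \<Rightarrow> bool" where
  "is_MAG n D B \<longleftrightarrow>
     D \<subseteq> {1..n} \<times> {1..n} \<and> B \<subseteq> {1..n} \<times> {1..n} \<and> sym B \<and>
     acyclic D \<and>
     (\<forall>v. sib B {v} \<inter> an D {v} = {}) \<and>
     (\<forall>a \<in> {1..n}. \<forall>b \<in> {1..n}. a \<noteq> b \<and> \<not> adj D B a b \<longrightarrow>
        (\<exists>Z \<subseteq> {1..n}. m_separated D B a b Z))"

definition topological :: "(nat \<times> nat) set \<Rightarrow> bool" where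
  "topological D \<longleftrightarrow> (\<forall>a b. (a, b) \<in> D \<longrightarrow> a < b)"

definition is_head :: "nat \<Rightarrow> (nat \<times> nat) set \<Rightarrow> (nat \<times> nat) set \<Rightarrow> nat set \<Rightarrow> bool" where
  "is_head n D B H \<longleftrightarrow> H \<noteq> {} \<and> H \<subseteq> {1..n} \<and> barren_in D {1..n} H = H \<and>
     (\<exists>v \<in> H. H \<subseteq> dis_in B (an D H) v)"

definition head_dis :: "(nat \<times> nat) set \<Rightarrow> (nat \<times> nat) set \<Rightarrow> nat set \<Rightarrow> nat set" where
  "head_dis D B H = dis_set B (an D H) H"

definition tail :: "(nat \<times> nat) set \<Rightarrow> (nat \<times> nat) set \<Rightarrow> nat set \<Rightarrow> nat set" where
  "tail D B H = (head_dis D B H - H) \<union> pa D (head_dis D B H)"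

definition head_step :: "(nat \<times> nat) set \<Rightarrow> (nat \<times> nat) set \<Rightarrow> nat set \<Rightarrow> nat set \<Rightarrow> nat set \<Rightarrow> bool" where
  "head_step D B H K H' \<longleftrightarrow>
     K \<noteq> {} \<and> K \<subseteq> H - {Max H} \<and>
     H' = barren_in D (an D H - K) (dis_in B (an D H - K) (Max H))"

definition assoc_indep :: "(nat \<times> nat) set \<Rightarrow> (nat \<times> nat) set \<Rightarrow> nat set \<Rightarrow> nat set \<Rightarrow> nat set \<Rightarrow> indep" where
  "assoc_indep D B H K H' =
     ({Max H}, (H \<union> tail D B H) - (H' \<union> tail D B H' \<union> K), (H' \<union> tail D B H') - {Max H})"

definition power_parent :: "nat \<Rightarrow> (nat \<times> nat) set \<Rightarrow> (nat \<times> nat) set \<Rightarrow> nat set \<Rightarrow> nat \<Rightarrow> nat set \<Rightarrow> bool" where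
  "power_parent n D B H k H' \<longleftrightarrow> is_head n D B H \<and> is_head n D B H' \<and>
     Max H' = Max H \<and> head_step D B H {k} H'"

definition ceil :: "(nat \<times> nat) set \<Rightarrow> nat set \<Rightarrow> nat set" where
  "ceil D W = {w \<in> W. W \<inter> an D {w} = {w}}"

definition ham :: "(nat \<times> nat) set \<Rightarrow> (nat \<times> nat) set \<Rightarrow> nat set \<Rightarrow> nat set" where
  "ham D B H = sib B (head_dis D B H) - head_dis D B H"

definition mb :: "(nat \<times> nat) set \<Rightarrow> (nat \<times> nat) set \<Rightarrow> nat \<Rightarrow> nat set \<Rightarrow> nat set" where
  "mb D B v A = (pa_in D A (dis_in B A v) \<union> dis_in B A v) - {v}"

definition ordered_local_markov :: "nat \<Rightarrow> (nat \<times> nat) set \<Rightarrow> (nat \<times> nat) set \<Rightarrow> indep set" where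
  "ordered_local_markov n D B =
     {({v}, A - (mb D B v A \<union> {v}), mb D B v A) | A v.
        A \<subseteq> {1..n} \<and> an D A = A \<and> v \<in> A \<and> (\<forall>c \<in> A. (v, c) \<notin> D)}"

definition L_tilde_i :: "nat \<Rightarrow> (nat \<times> nat) set \<Rightarrow> (nat \<times> nat) set \<Rightarrow> nat \<Rightarrow> indep set" where
  "L_tilde_i n D B i =
     {({i}, {1..i-1} - mb D B i {1..i}, mb D B i {1..i})} \<union>
     {assoc_indep D B Hs {k} H' | H' Hs k.
        is_head n D B H' \<and> Max H' = i \<and>
        H' \<noteq> barren_in D {1..i} (dis_in B {1..i} i) \<and>
        k \<in> ceil D (ham D B H') \<and> (\<forall>x \<in> ceil D (ham D B H'). k \<le> x) \<and>
        power_parent n D B Hs k H' \<and>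
        (\<forall>H. power_parent n D B H k H' \<longrightarrow> an D H \<subseteq> an D Hs)}"

definition L_tilde :: "nat \<Rightarrow> (nat \<times> nat) set \<Rightarrow> (nat \<times> nat) set \<Rightarrow> indep set" where
  "L_tilde n D B = (\<Union>i \<in> {1..n}. L_tilde_i n D B i)"

inductive sg_derivable :: "indep set \<Rightarrow> indep \<Rightarrow> bool" for S :: "indep set" where
  base: "t \<in> S \<Longrightarrow> sg_derivable S t"
| symmetry: "sg_derivable S (X, Y, Z) \<Longrightarrow> sg_derivable S (Y, X, Z)"
| decomposition: "sg_derivable S (X, Y \<union> W, Z) \<Longrightarrow> sg_derivable S (X, Y, Z)"
| weak_union: "sg_derivable S (X, Y \<union> W, Z) \<Longrightarrow> sg_derivable S (X, W, Y \<union> Z)"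
| contraction: "sg_derivable S (X, Y, Z) \<Longrightarrow> sg_derivable S (X, W, Y \<union> Z) \<Longrightarrow>
                sg_derivable S (X, Y \<union> W, Z)"

end

theory Submission
  imports Defs
begin

text \<open>
  The collection L\<tilde> consists of consequences of the ordered local Markov property: the
  statement attached to H \<rightarrow>^k H' is a decomposition of the ordered local Markov statement of
  the maximal vertex of H in the ancestral set an(H) - {k}, and the statements of type (a) are
  the ordered local Markov statements of the sets [i].

  Conversely, the ordered local Markov statement of v in an ancestral set A is derived by
  induction on the largest vertex m of A. If v \<noteq> m, it follows by contraction from the
  statements of v in A - {m} and of m in A. For v = m we use descending induction on A within
  [m]. If the district S of m in A has no sibling in [m] outside S, then S is also the district
  of m in [m] and the statement is a decomposition of the one of type (a). Otherwise let k be
  the least vertex of the ceiling of ham(S) and enlarge A to the ancestral set C of vertices of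
  [m] that descend from no vertex of ham(S), together with k. With H' the barren part of S, the
  barren part of the district of m in C is the largest parent head H* with H* \<rightarrow>^k H', and the
  statements of m in C, of k in C - {m} and of H* \<rightarrow>^k H' combine to the statement of m in A.
\<close>

section \<open>Derived semi-graphoid rules\<close>

lemma sg_decomposition_subset:
  assumes "sg_derivable L (X, Y, Z)" and "Y' \<subseteq> Y"
  shows "sg_derivable L (X, Y', Z)"
proof -
  have "Y = Y' \<union> Y" using assms(2) by blast
  with assms(1) show ?thesis by (metis sg_derivable.decomposition)
qed

lemma sg_weak_union_subset:
  assumes "sg_derivable L (X, Y, Z)" and "W \<subseteq> Y" and "Z \<subseteq> Z'" and "Z' \<subseteq> Y \<union> Z"
  shows "sg_derivable L (X, W, Z')"
proof -
  have "sg_derivable L (X, (Z' - Z) \<union> W, Z)"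
    using assms(1) by (rule sg_decomposition_subset) (use assms(2,4) in blast)
  then have "sg_derivable L (X, W, (Z' - Z) \<union> Z)" by (rule sg_derivable.weak_union)
  moreover have "(Z' - Z) \<union> Z = Z'" using assms(3) by blast
  ultimately show ?thesis by simp
qed

lemma sg_contraction_left:
  assumes "sg_derivable L (X, R, Y \<union> Z)" and "sg_derivable L (Y, R, Z)"
  shows "sg_derivable L (X, R, Z)" and "sg_derivable L (Y, R, X \<union> Z)"
proof -
  have "sg_derivable L (R, Y \<union> X, Z)"
    using sg_derivable.symmetry[OF assms(2)] sg_derivable.symmetry[OF assms(1)]
    by (rule sg_derivable.contraction)
  then have XY: "sg_derivable L (R, X \<union> Y, Z)" by (simp add: Un_commute)
  show "sg_derivable L (X, R, Z)"
    using sg_derivable.decomposition[OF XY] by (rule sg_derivable.symmetry)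
  show "sg_derivable L (Y, R, X \<union> Z)"
    using sg_derivable.weak_union[OF XY] by (rule sg_derivable.symmetry)
qed

section \<open>Ancestral sets, districts, heads and Markov blankets\<close>

definition with_pa :: "(nat \<times> nat) set \<Rightarrow> nat set \<Rightarrow> nat set" where
  "with_pa D S = S \<union> pa D S"

definition barren :: "(nat \<times> nat) set \<Rightarrow> nat set \<Rightarrow> nat set" where
  "barren D S = {w \<in> S. \<forall>u \<in> S. (w, u) \<in> D\<^sup>* \<longrightarrow> u = w}"

lemma an_subset: "S \<subseteq> an D S"
  unfolding an_def by auto

lemma an_mono: "S \<subseteq> T \<Longrightarrow> an D S \<subseteq> an D T"
  unfolding an_def by auto

lemma an_idem: "an D (an D S) = an D S"
  unfolding an_def by (blast intro: rtrancl_trans)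

lemma ancestralD: "an D A = A \<Longrightarrow> (u, w) \<in> D\<^sup>* \<Longrightarrow> w \<in> A \<Longrightarrow> u \<in> A"
  unfolding an_def by blast

lemma ancestral_an_subset: "an D A = A \<Longrightarrow> S \<subseteq> A \<Longrightarrow> an D S \<subseteq> A"
  using an_mono by blast

lemma ancestral_Diff:
  assumes "an D A = A" and "\<forall>w \<in> A. (v, w) \<in> D\<^sup>* \<longrightarrow> w = v"
  shows "an D (A - {v}) = A - {v}"
proof
  show "A - {v} \<subseteq> an D (A - {v})" by (rule an_subset)
  show "an D (A - {v}) \<subseteq> A - {v}"
    unfolding an_def using ancestralD[OF assms(1)] assms(2) by blast
qed

lemma rtrancl_ancestral:
  assumes "an D A = A" and "(w, h) \<in> D\<^sup>*" and "h \<in> A"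
  shows "(w, h) \<in> (D \<inter> A \<times> A)\<^sup>*"
  using assms(2)
proof (induction rule: converse_rtrancl_induct)
  case base
  show ?case by simp
next
  case (step y z)
  have "y \<in> A" and "z \<in> A"
    using step(1,2) assms(1,3) ancestralD converse_rtrancl_into_rtrancl by metis+
  with step show ?case by (blast intro: converse_rtrancl_into_rtrancl)
qed

lemma barren_in_ancestral:
  assumes "an D W = W" and "S \<subseteq> W"
  shows "barren_in D W S = barren D S"
proof -
  have "u \<in> desc_in D W w \<longleftrightarrow> (w, u) \<in> D\<^sup>*" if "u \<in> S" for u w
    using that assms rtrancl_ancestral[OF assms(1)] rtrancl_mono[of "D \<inter> W \<times> W" D]
    unfolding desc_in_def by blast
  then show ?thesis unfolding barren_in_def barren_def by auto
qed

lemma barren_idem: "barren D (barren D S) = barren D S"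
  unfolding barren_def by blast

lemma pa_subset_an: "pa D S \<subseteq> an D S"
  unfolding pa_def an_def by auto

lemma with_pa_mono: "S \<subseteq> T \<Longrightarrow> with_pa D S \<subseteq> with_pa D T"
  unfolding with_pa_def pa_def by auto

lemma with_pa_subset_ancestral: "an D A = A \<Longrightarrow> S \<subseteq> A \<Longrightarrow> with_pa D S \<subseteq> A"
  unfolding with_pa_def using pa_subset_an ancestral_an_subset by blast

lemma notin_with_pa: "v \<notin> S \<Longrightarrow> \<forall>y \<in> S. (v, y) \<notin> D \<Longrightarrow> v \<notin> with_pa D S"
  unfolding with_pa_def pa_def by auto

lemma dis_in_subset: "dis_in B W v \<subseteq> W"
  unfolding dis_in_def by auto

lemma dis_in_self: "v \<in> W \<Longrightarrow> v \<in> dis_in B W v"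
  unfolding dis_in_def by auto

lemma dis_in_mono: "W \<subseteq> A \<Longrightarrow> dis_in B W v \<subseteq> dis_in B A v"
proof -
  assume "W \<subseteq> A"
  then have "(B \<inter> W \<times> W)\<^sup>* \<subseteq> (B \<inter> A \<times> A)\<^sup>*" by (intro rtrancl_mono) auto
  with \<open>W \<subseteq> A\<close> show ?thesis unfolding dis_in_def by auto
qed

lemma dis_in_subset_closed:
  assumes "v \<in> S" and "\<And>x y. x \<in> S \<Longrightarrow> y \<in> W \<Longrightarrow> (x, y) \<in> B \<Longrightarrow> y \<in> S"
  shows "dis_in B W v \<subseteq> S"
proof
  fix u assume "u \<in> dis_in B W v"
  then have "(v, u) \<in> (B \<inter> W \<times> W)\<^sup>*" unfolding dis_in_def by simp
  then show "u \<in> S"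
    by (induction rule: rtrancl_induct) (use assms in auto)
qed

lemma dis_in_restrict:
  assumes "v \<in> W" and "W \<subseteq> A" and "dis_in B A v \<subseteq> W"
  shows "dis_in B W v = dis_in B A v"
proof
  show "dis_in B W v \<subseteq> dis_in B A v" using assms(2) by (rule dis_in_mono)
  have "(v, u) \<in> (B \<inter> W \<times> W)\<^sup>*" if "(v, u) \<in> (B \<inter> A \<times> A)\<^sup>*" for u
    using that
  proof (induction rule: rtrancl_induct)
    case base
    show ?case by simp
  next
    case (step y z)
    then have "y \<in> dis_in B A v" and "z \<in> dis_in B A v"
      unfolding dis_in_def by (auto intro: rtrancl_into_rtrancl)
    with step assms(3) show ?case by (blast intro: rtrancl_into_rtrancl)
  qed
  then show "dis_in B A v \<subseteq> dis_in B W v"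
    using assms(3) unfolding dis_in_def by blast
qed

lemma head_with_tail: "H \<union> tail D B H = with_pa D (head_dis D B H)"
proof -
  have "h \<in> head_dis D B H" if "h \<in> H" for h
    unfolding head_dis_def dis_set_def
    using that dis_in_self[of h "an D H" B] an_subset[of H D] by blast
  then show ?thesis unfolding tail_def with_pa_def by blast
qed

lemma with_pa_dis_in_self: "v \<in> W \<Longrightarrow> v \<in> with_pa D (dis_in B W v)"
  unfolding with_pa_def using dis_in_self by blast

definition olm_stmt :: "(nat \<times> nat) set \<Rightarrow> (nat \<times> nat) set \<Rightarrow> nat set \<Rightarrow> nat \<Rightarrow> indep" where
  "olm_stmt D B A v = ({v}, A - (mb D B v A \<union> {v}), mb D B v A)"

lemma ordered_local_markov_eq:
  "ordered_local_markov n D B =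
     {olm_stmt D B A v | A v. A \<subseteq> {1..n} \<and> an D A = A \<and> v \<in> A \<and> (\<forall>c \<in> A. (v, c) \<notin> D)}"
  unfolding ordered_local_markov_def olm_stmt_def ..

lemma mb_ancestral:
  assumes "an D A = A"
  shows "mb D B v A = with_pa D (dis_in B A v) - {v}"
proof -
  have "pa_in D A (dis_in B A v) = pa D (dis_in B A v)"
    using with_pa_subset_ancestral[OF assms dis_in_subset] dis_in_subset
    unfolding pa_in_def pa_def with_pa_def by blast
  then show ?thesis unfolding mb_def with_pa_def by auto
qed

lemma olm_stmt_ancestral:
  assumes "an D A = A" and "v \<in> A"
  shows "olm_stmt D B A v =
    ({v}, A - with_pa D (dis_in B A v), with_pa D (dis_in B A v) - {v})"
  using with_pa_dis_in_self[OF assms(2)] unfolding olm_stmt_def mb_ancestral[OF assms(1)] by auto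

lemma olm_stmt_interval:
  assumes "1 \<le> i"
  shows "olm_stmt D B {1..i} i = ({i}, {1..i-1} - mb D B i {1..i}, mb D B i {1..i})"
  using assms unfolding olm_stmt_def by auto

locale topo_mixed_graph =
  fixes n :: nat and D B :: "(nat \<times> nat) set"
  assumes D_sub: "D \<subseteq> {1..n} \<times> {1..n}"
    and B_sub: "B \<subseteq> {1..n} \<times> {1..n}"
    and sym_B: "sym B"
    and D_less: "(a, b) \<in> D \<Longrightarrow> a < b"
begin

lemma rtrancl_le: "(a, b) \<in> D\<^sup>* \<Longrightarrow> a \<le> b"
  by (induction rule: rtrancl_induct) (auto dest: D_less)

lemma rtrancl_antisym: "(a, b) \<in> D\<^sup>* \<Longrightarrow> (b, a) \<in> D\<^sup>* \<Longrightarrow> a = b"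
  using rtrancl_le[of a b] rtrancl_le[of b a] by simp

lemma an_interval: "S \<subseteq> {1..m} \<Longrightarrow> an D S \<subseteq> {1..m}"
proof
  fix x assume S: "S \<subseteq> {1..m}" and "x \<in> an D S"
  then obtain h where h: "h \<in> S" "(x, h) \<in> D\<^sup>*" unfolding an_def by auto
  have "1 \<le> x"
    using h S D_sub by (cases rule: converse_rtranclE[OF h(2)]) auto
  with h S rtrancl_le show "x \<in> {1..m}" by fastforce
qed

lemma ancestral_interval: "an D {1..m} = {1..m}"
  using an_interval[of "{1..m}" m] an_subset[of "{1..m}"] by auto

lemma ancestral_Diff_Max:
  assumes "an D A = A" and "A \<subseteq> {1..m}"
  shows "an D (A - {m}) = A - {m}"
proof (rule ancestral_Diff[OF assms(1)])
  show "\<forall>w \<in> A. (m, w) \<in> D\<^sup>* \<longrightarrow> w = m"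
    using assms(2) rtrancl_le by fastforce
qed

lemma childless_Max: "A \<subseteq> {1..m} \<Longrightarrow> c \<in> A \<Longrightarrow> (m, c) \<notin> D"
  using D_less by fastforce

lemma least_in_ceil:
  assumes "finite W" and "z \<in> W"
  obtains k where "k \<in> ceil D W" and "\<forall>x \<in> ceil D W. k \<le> x" and "k \<le> z"
proof -
  have "Min W \<in> W" using Min_in assms by blast
  moreover have "u = Min W" if "u \<in> W" and "(u, Min W) \<in> D\<^sup>*" for u
    using rtrancl_le[OF that(2)] Min_le[OF assms(1) that(1)] by simp
  ultimately have Min_W: "Min W \<in> ceil D W" unfolding ceil_def an_def by auto
  have fin: "finite (ceil D W)" using assms(1) unfolding ceil_def by simp
  show ?thesis
  proof (rule that)
    show "Min (ceil D W) \<in> ceil D W" using Min_in[OF fin] Min_W by blast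
    show "\<forall>x \<in> ceil D W. Min (ceil D W) \<le> x" using Min_le[OF fin] by blast
    show "Min (ceil D W) \<le> z" using Min_le[OF fin Min_W] Min_le[OF assms] by linarith
  qed
qed

lemma subset_an_barren:
  assumes "finite S"
  shows "S \<subseteq> an D (barren D S)"
proof
  fix x assume x: "x \<in> S"
  let ?U = "{u \<in> S. (x, u) \<in> D\<^sup>*}"
  have fin: "finite ?U" using assms by simp
  have U: "Max ?U \<in> ?U" using Max_in[OF fin] x by blast
  have "u = Max ?U" if "u \<in> S" and "(Max ?U, u) \<in> D\<^sup>*" for u
  proof -
    have "u \<in> ?U" using U that by (blast intro: rtrancl_trans)
    with rtrancl_le[OF that(2)] Max_ge[OF fin] show ?thesis by fastforce
  qed
  with U have "Max ?U \<in> barren D S" unfolding barren_def by blast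
  then show "x \<in> an D (barren D S)" unfolding an_def using U by auto
qed

lemma sym_restrict: "sym (B \<inter> W \<times> W)"
  using sym_B unfolding sym_def by blast

lemma dis_in_eq: "u \<in> dis_in B W v \<Longrightarrow> dis_in B W u = dis_in B W v"
proof -
  assume "u \<in> dis_in B W v"
  then have vu: "(v, u) \<in> (B \<inter> W \<times> W)\<^sup>*" unfolding dis_in_def by simp
  then have "(u, v) \<in> (B \<inter> W \<times> W)\<^sup>*"
    using sym_rtrancl[OF sym_restrict] unfolding sym_def by blast
  with vu show ?thesis unfolding dis_in_def by (blast intro: rtrancl_trans)
qed

lemma sib_dis_in: "h \<in> sib B (dis_in B W v) \<Longrightarrow> h \<in> W \<Longrightarrow> h \<in> dis_in B W v"
  using sym_B unfolding sib_def dis_in_def sym_def by (blast intro: rtrancl_into_rtrancl)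

lemma is_head_barren: "is_head n D B H \<Longrightarrow> barren D H = H"
  unfolding is_head_def using barren_in_ancestral[OF ancestral_interval] by metis

lemma head_finite: "is_head n D B H \<Longrightarrow> finite H"
  unfolding is_head_def by (meson finite_atLeastAtMost finite_subset)

lemma ancestral_an_head_Diff:
  assumes "is_head n D B H" and "k \<in> H"
  shows "an D (an D H - {k}) = an D H - {k}"
proof (rule ancestral_Diff[OF an_idem])
  show "\<forall>w \<in> an D H. (k, w) \<in> D\<^sup>* \<longrightarrow> w = k"
  proof (intro ballI impI)
    fix w assume "w \<in> an D H" and kw: "(k, w) \<in> D\<^sup>*"
    then obtain h where h: "h \<in> H" "(w, h) \<in> D\<^sup>*" unfolding an_def by auto
    have "(k, h) \<in> D\<^sup>*" using kw h(2) by (rule rtrancl_trans)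
    then have "h = k"
      using is_head_barren[OF assms(1)] assms(2) h(1) unfolding barren_def by blast
    with kw h(2) show "w = k" by (blast intro: rtrancl_antisym)
  qed
qed

lemma head_of_district:
  assumes A: "an D A = A" "A \<subseteq> {1..n}" and v: "v \<in> A"
  defines "H \<equiv> barren_in D A (dis_in B A v)"
  shows "is_head n D B H" and "head_dis D B H = dis_in B A v"
    and "H \<union> tail D B H = with_pa D (dis_in B A v)"
    and "dis_in B A v \<subseteq> an D H" and "an D H \<subseteq> A"
proof -
  let ?S = "dis_in B A v"
  have SA: "?S \<subseteq> A" by (rule dis_in_subset)
  have H: "H = barren D ?S" unfolding H_def using barren_in_ancestral[OF A(1) SA] .
  have HS: "H \<subseteq> ?S" unfolding H barren_def by blast
  have "finite ?S" using SA A(2) by (meson finite_atLeastAtMost finite_subset order_trans)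
  then show S_an: "?S \<subseteq> an D H" unfolding H by (rule subset_an_barren)
  show an_A: "an D H \<subseteq> A" using ancestral_an_subset[OF A(1)] HS SA by blast
  have dis_h: "dis_in B (an D H) h = ?S" if "h \<in> H" for h
  proof -
    have "dis_in B A h = ?S" using dis_in_eq HS that by blast
    moreover have "h \<in> an D H" using that an_subset by blast
    ultimately show ?thesis using dis_in_restrict[of h "an D H" A] an_A S_an by simp
  qed
  have "H \<noteq> {}" using S_an dis_in_self[OF v] unfolding an_def by auto
  then show "head_dis D B H = ?S" unfolding head_dis_def dis_set_def using dis_h by auto
  then show "H \<union> tail D B H = with_pa D ?S" using head_with_tail by simp
  obtain h where h: "h \<in> H" using \<open>H \<noteq> {}\<close> by blast
  have "barren_in D {1..n} H = H"
    using barren_in_ancestral[OF ancestral_interval] HS SA A(2) barren_idem H by (metis order_trans)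
  moreover have "H \<subseteq> dis_in B (an D H) h" using dis_h[OF h] HS by simp
  ultimately show "is_head n D B H"
    unfolding is_head_def using \<open>H \<noteq> {}\<close> h HS SA A(2) by blast
qed

lemma Max_head_of_district:
  assumes "an D A = A" and "A \<subseteq> {1..m}" and "m \<in> A"
  shows "Max (barren_in D A (dis_in B A m)) = m"
proof -
  let ?S = "dis_in B A m"
  have "?S \<subseteq> {1..m}" using dis_in_subset assms(2) by blast
  then have m: "m \<in> barren D ?S" and sub: "barren D ?S \<subseteq> {1..m}"
    using dis_in_self[OF assms(3)] rtrancl_le unfolding barren_def by fastforce+
  have "barren_in D A ?S = barren D ?S" by (rule barren_in_ancestral[OF assms(1) dis_in_subset])
  moreover have "finite (barren D ?S)" using sub by (rule finite_subset) simp
  ultimately show ?thesis using m sub by (auto intro!: Max_eqI)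
qed

lemma Max_head_childless:
  assumes "is_head n D B H" and "c \<in> an D H"
  shows "(Max H, c) \<notin> D"
proof
  assume "(Max H, c) \<in> D"
  obtain h where "h \<in> H" and "(c, h) \<in> D\<^sup>*" using assms(2) unfolding an_def by auto
  then have "c \<le> Max H" using rtrancl_le Max_ge[OF head_finite[OF assms(1)]] by fastforce
  with D_less[OF \<open>(Max H, c) \<in> D\<close>] show False by simp
qed

section \<open>The ordered local Markov property implies L\<tilde>\<close>

lemma assoc_indep_derivable_from_olm:
  assumes Hs: "is_head n D B Hs" and step: "head_step D B Hs {k} H'"
  shows "sg_derivable (ordered_local_markov n D B) (assoc_indep D B Hs {k} H')"
proof -
  define j where "j = Max Hs"
  define A where "A = an D Hs - {k}"
  let ?S = "dis_in B A j"
  have fin: "finite Hs" using head_finite[OF Hs] .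
  have Hs_n: "Hs \<subseteq> {1..n}" and "Hs \<noteq> {}" using Hs unfolding is_head_def by auto
  have j: "j \<in> Hs" unfolding j_def using Max_in[OF fin \<open>Hs \<noteq> {}\<close>] .
  have k: "k \<in> Hs" "k \<noteq> j" using step unfolding head_step_def j_def by auto
  have A_anc: "an D A = A" unfolding A_def by (rule ancestral_an_head_Diff[OF Hs k(1)])
  have A_n: "A \<subseteq> {1..n}" unfolding A_def using an_interval[OF Hs_n] by blast
  have j_A: "j \<in> A" unfolding A_def using j k(2) an_subset by blast
  have "\<forall>c \<in> A. (j, c) \<notin> D"
    unfolding A_def j_def using Max_head_childless[OF Hs] by blast
  then have "sg_derivable (ordered_local_markov n D B) (olm_stmt D B A j)"
    unfolding ordered_local_markov_eq using A_n A_anc j_A by (blast intro: sg_derivable.base)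
  then have olm: "sg_derivable (ordered_local_markov n D B) ({j}, A - with_pa D ?S, with_pa D ?S - {j})"
    unfolding olm_stmt_ancestral[OF A_anc j_A] .
  have "H' = barren_in D A ?S" using step unfolding head_step_def A_def j_def by simp
  then have H'_tail: "H' \<union> tail D B H' = with_pa D ?S"
    using head_of_district(3)[OF A_anc A_n j_A] by simp
  have "head_dis D B Hs \<subseteq> an D Hs"
    unfolding head_dis_def dis_set_def using dis_in_subset by blast
  then have "with_pa D (head_dis D B Hs) \<subseteq> an D Hs"
    by (rule with_pa_subset_ancestral[OF an_idem])
  then have "with_pa D (head_dis D B Hs) - (with_pa D ?S \<union> {k}) \<subseteq> A - with_pa D ?S"
    unfolding A_def by blast
  with olm show ?thesis
    unfolding assoc_indep_def H'_tail head_with_tail[of Hs] j_def[symmetric]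
    by (rule sg_decomposition_subset)
qed

lemma L_tilde_derivable_from_olm:
  assumes "t \<in> L_tilde n D B"
  shows "sg_derivable (ordered_local_markov n D B) t"
proof -
  from assms obtain i where i: "i \<in> {1..n}" "t \<in> L_tilde_i n D B i"
    unfolding L_tilde_def by blast
  from i(2) consider "t = ({i}, {1..i-1} - mb D B i {1..i}, mb D B i {1..i})"
    | H' Hs k where "t = assoc_indep D B Hs {k} H'" "power_parent n D B Hs k H'"
    unfolding L_tilde_i_def by blast
  then show ?thesis
  proof cases
    case 1
    have "{1..i} \<subseteq> {1..n}" and "i \<in> {1..i}" and "\<forall>c \<in> {1..i}. (i, c) \<notin> D"
      using i(1) childless_Max by auto
    then have "olm_stmt D B {1..i} i \<in> ordered_local_markov n D B"
      unfolding ordered_local_markov_eq using ancestral_interval by blast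
    then show ?thesis using 1 olm_stmt_interval i(1) sg_derivable.base by force
  next
    case 2
    then show ?thesis using assoc_indep_derivable_from_olm unfolding power_parent_def by blast
  qed
qed

section \<open>L\<tilde> implies the ordered local Markov property\<close>

context
  fixes A :: "nat set" and m v :: nat
  assumes A_anc: "an D A = A" and A_sub: "A \<subseteq> {1..m}" and m_in_A: "m \<in> A"
    and v_in_A: "v \<in> A" and v_ne_m: "v \<noteq> m" and v_childless: "\<forall>c \<in> A. (v, c) \<notin> D"
begin

lemma olm_stmt_Diff_Max:
  "olm_stmt D B (A - {m}) v =
    ({v}, (A - {m}) - with_pa D (dis_in B (A - {m}) v), with_pa D (dis_in B (A - {m}) v) - {v})"
  using olm_stmt_ancestral[OF ancestral_Diff_Max[OF A_anc A_sub]] v_in_A v_ne_m by simp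

lemma olm_stmt_nonmax_other_district:
  assumes m_notin: "m \<notin> dis_in B A v"
    and rest: "sg_derivable L (olm_stmt D B (A - {m}) v)"
    and at_max: "sg_derivable L (olm_stmt D B A m)"
  shows "sg_derivable L (olm_stmt D B A v)"
proof -
  let ?S = "dis_in B A v" and ?Sm = "dis_in B A m"
  have "dis_in B (A - {m}) v = ?S"
    using dis_in_restrict[of v "A - {m}" A] v_in_A v_ne_m m_notin dis_in_subset[of B A v] by blast
  then have rest': "sg_derivable L ({v}, (A - {m}) - with_pa D ?S, with_pa D ?S - {v})"
    using rest unfolding olm_stmt_Diff_Max by simp
  have "v \<notin> ?Sm"
  proof
    assume "v \<in> ?Sm"
    then have "?S = ?Sm" by (rule dis_in_eq)
    with m_notin dis_in_self[OF m_in_A] show False by simp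
  qed
  moreover have "\<forall>y \<in> ?Sm. (v, y) \<notin> D" using v_childless dis_in_subset[of B A m] by blast
  ultimately have v_notin: "v \<notin> with_pa D ?Sm" by (rule notin_with_pa)
  have "\<forall>y \<in> ?S. (m, y) \<notin> D" using childless_Max[OF A_sub] dis_in_subset[of B A v] by blast
  with m_notin have m_notin_wp: "m \<notin> with_pa D ?S" by (rule notin_with_pa)
  have m_v: "sg_derivable L ({m}, {v}, A - {m, v})"
  proof (rule sg_weak_union_subset)
    show "sg_derivable L ({m}, A - with_pa D ?Sm, with_pa D ?Sm - {m})"
      using at_max unfolding olm_stmt_ancestral[OF A_anc m_in_A] .
    show "with_pa D ?Sm - {m} \<subseteq> A - {m, v}"
      using with_pa_subset_ancestral[OF A_anc dis_in_subset[of B A m]] v_notin by blast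
  qed (use v_in_A v_notin in auto)
  have "A - {m, v} = ((A - {m}) - with_pa D ?S) \<union> (with_pa D ?S - {v})"
    using with_pa_subset_ancestral[OF A_anc dis_in_subset[of B A v]] m_notin_wp
      with_pa_dis_in_self[OF v_in_A] by blast
  with m_v have "sg_derivable L ({v}, {m}, ((A - {m}) - with_pa D ?S) \<union> (with_pa D ?S - {v}))"
    by (metis sg_derivable.symmetry)
  with rest' have "sg_derivable L ({v}, ((A - {m}) - with_pa D ?S) \<union> {m}, with_pa D ?S - {v})"
    by (rule sg_derivable.contraction)
  moreover have "((A - {m}) - with_pa D ?S) \<union> {m} = A - with_pa D ?S"
    using m_in_A m_notin_wp by blast
  ultimately show ?thesis unfolding olm_stmt_ancestral[OF A_anc v_in_A] by simp
qed

lemma olm_stmt_nonmax_same_district: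
  assumes m_in: "m \<in> dis_in B A v"
    and rest: "sg_derivable L (olm_stmt D B (A - {m}) v)"
    and at_max: "sg_derivable L (olm_stmt D B A m)"
  shows "sg_derivable L (olm_stmt D B A v)"
proof -
  let ?S = "dis_in B A v" and ?S' = "dis_in B (A - {m}) v"
  let ?R = "A - with_pa D ?S" and ?M = "with_pa D ?S - {v, m}"
  have S'_sub: "?S' \<subseteq> ?S" by (rule dis_in_mono) blast
  have "?S' \<subseteq> A - {m}" by (rule dis_in_subset)
  then have "m \<notin> ?S'" and "\<forall>y \<in> ?S'. (m, y) \<notin> D" using childless_Max[OF A_sub] by auto
  then have m_notin_S': "m \<notin> with_pa D ?S'" by (rule notin_with_pa)
  have m_wp: "m \<in> with_pa D ?S" using m_in unfolding with_pa_def by blast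
  have v_wp: "v \<in> with_pa D ?S" using with_pa_dis_in_self[OF v_in_A] .
  have "sg_derivable L ({v}, ?R, ?M)"
  proof (rule sg_weak_union_subset[OF rest[unfolded olm_stmt_Diff_Max]])
    show "?R \<subseteq> (A - {m}) - with_pa D ?S'" using with_pa_mono[OF S'_sub] m_wp by blast
    show "with_pa D ?S' - {v} \<subseteq> ?M" using with_pa_mono[OF S'_sub] m_notin_S' by blast
    show "?M \<subseteq> ((A - {m}) - with_pa D ?S') \<union> (with_pa D ?S' - {v})"
      using with_pa_subset_ancestral[OF A_anc dis_in_subset[of B A v]] by blast
  qed
  moreover have "sg_derivable L ({m}, ?R, {v} \<union> ?M)"
  proof -
    have "with_pa D ?S - {m} = {v} \<union> ?M" using v_wp v_ne_m by blast
    with at_max show ?thesis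
      unfolding olm_stmt_ancestral[OF A_anc m_in_A] dis_in_eq[OF m_in] by simp
  qed
  ultimately have "sg_derivable L ({v}, ?R, {m} \<union> ?M)"
    by (rule sg_contraction_left(2)[rotated])
  moreover have "{m} \<union> ?M = with_pa D ?S - {v}" using m_wp v_ne_m by blast
  ultimately show ?thesis unfolding olm_stmt_ancestral[OF A_anc v_in_A] by simp
qed

end

end

locale ham_extension = topo_mixed_graph +
  fixes A :: "nat set" and m k :: nat
  assumes m_le_n: "m \<le> n" and A_sub: "A \<subseteq> {1..m}" and A_anc: "an D A = A" and m_in_A: "m \<in> A"
    and k_ceil: "k \<in> ceil D (sib B (dis_in B A m) - dis_in B A m)"
    and k_le_m: "k \<le> m"
begin

abbreviation "dis_A \<equiv> dis_in B A m"
abbreviation "ham_A \<equiv> sib B dis_A - dis_A"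

definition nondesc :: "nat set" where
  "nondesc = {1..m} - {u. \<exists>h \<in> ham_A. (h, u) \<in> D\<^sup>*}"

abbreviation "C \<equiv> insert k nondesc"
abbreviation "dis_C \<equiv> dis_in B C m"

text \<open>In the notation of the statement, head_A is the head H' and head_C is the largest parent
  head H* with H* \<rightarrow>^k H'.\<close>

abbreviation "head_A \<equiv> barren_in D A dis_A"
abbreviation "head_C \<equiv> barren_in D C dis_C"

lemma k_ham: "k \<in> ham_A"
  using k_ceil unfolding ceil_def by blast

lemma k_interval: "k \<in> {1..m}"
  using k_ham k_le_m B_sub unfolding sib_def by auto

lemma nondesc_descendant: "h \<in> ham_A \<Longrightarrow> (h, u) \<in> D\<^sup>* \<Longrightarrow> u \<notin> nondesc"
  unfolding nondesc_def by blast

lemma A_subset_nondesc: "A \<subseteq> nondesc"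
proof
  fix u assume u: "u \<in> A"
  have "(h, u) \<notin> D\<^sup>*" if h: "h \<in> ham_A" for h
  proof
    assume "(h, u) \<in> D\<^sup>*"
    then have "h \<in> A" using ancestralD[OF A_anc] u by blast
    then have "h \<in> dis_A" using sib_dis_in h by blast
    with h show False by blast
  qed
  then show "u \<in> nondesc" unfolding nondesc_def using u A_sub by blast
qed

lemma k_notin_A: "k \<notin> A"
  using A_subset_nondesc nondesc_descendant[OF k_ham rtrancl_refl] by blast

lemma k_ne_m: "k \<noteq> m"
  using k_notin_A m_in_A by blast

lemma C_sub: "C \<subseteq> {1..m}"
  unfolding nondesc_def using k_interval by blast

lemma m_in_C: "m \<in> C"
  using A_subset_nondesc m_in_A by blast

lemma card_interval_Diff_C: "card ({1..m} - C) < card ({1..m} - A)"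
  by (rule psubset_card_mono) (use A_subset_nondesc k_notin_A k_interval in auto)

lemma descendant_k_in_C: "(k, u) \<in> D\<^sup>* \<Longrightarrow> u \<in> C \<Longrightarrow> u = k"
  using nondesc_descendant[OF k_ham] by blast

lemma C_ancestral: "an D C = C"
proof
  show "C \<subseteq> an D C" by (rule an_subset)
  show "an D C \<subseteq> C"
  proof
    fix u assume "u \<in> an D C"
    then obtain w where w: "w \<in> C" "(u, w) \<in> D\<^sup>*" unfolding an_def by blast
    have u_m: "u \<in> {1..m}" using an_interval[OF C_sub] \<open>u \<in> an D C\<close> by blast
    show "u \<in> C"
    proof (cases "u = k")
      case False
      have "(h, u) \<notin> D\<^sup>*" if h: "h \<in> ham_A" for h
      proof
        assume hu: "(h, u) \<in> D\<^sup>*"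
        then have hw: "(h, w) \<in> D\<^sup>*" using w(2) by (rule rtrancl_trans)
        show False
        proof (cases "w = k")
          case True
          then have "h = k" using k_ceil h hw unfolding ceil_def an_def by blast
          then show False using hu w(2) True False rtrancl_antisym by blast
        next
          case False
          then show False using w(1) hw h nondesc_descendant by blast
        qed
      qed
      then show ?thesis unfolding nondesc_def using u_m by blast
    qed simp
  qed
qed

lemma C_Diff_m:
  shows "C - {m} \<subseteq> {1..m-1}" and "an D (C - {m}) = C - {m}"
    and "k \<in> C - {m}" and "\<forall>c \<in> C - {m}. (k, c) \<notin> D"
proof -
  show "C - {m} \<subseteq> {1..m-1}" using C_sub by fastforce
  show "an D (C - {m}) = C - {m}" by (rule ancestral_Diff_Max[OF C_ancestral C_sub])
  show "k \<in> C - {m}" using k_ne_m by blast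
  show "\<forall>c \<in> C - {m}. (k, c) \<notin> D"
  proof (intro ballI notI)
    fix c assume "c \<in> C - {m}" and kc: "(k, c) \<in> D"
    then have "c = k" using descendant_k_in_C by blast
    with D_less[OF kc] show False by simp
  qed
qed

lemma dis_nondesc: "dis_in B nondesc m = dis_A"
proof
  show "dis_A \<subseteq> dis_in B nondesc m" by (rule dis_in_mono[OF A_subset_nondesc])
  show "dis_in B nondesc m \<subseteq> dis_A"
  proof (rule dis_in_subset_closed)
    show "m \<in> dis_A" using dis_in_self[OF m_in_A] .
    fix x y assume "x \<in> dis_A" "y \<in> nondesc" "(x, y) \<in> B"
    show "y \<in> dis_A"
    proof (rule ccontr)
      assume "y \<notin> dis_A"
      then have "y \<in> ham_A"
        using \<open>x \<in> dis_A\<close> \<open>(x, y) \<in> B\<close> sym_B unfolding sib_def sym_def by blast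
      then show False using \<open>y \<in> nondesc\<close> nondesc_descendant by blast
    qed
  qed
qed

lemma dis_A_subset_dis_C: "dis_A \<subseteq> dis_C"
  using dis_in_mono[of nondesc C B m] dis_nondesc by blast

lemma k_in_dis_C: "k \<in> dis_C"
  using sib_dis_in[of k C m] k_ham dis_A_subset_dis_C unfolding sib_def by blast

lemma A_n: "A \<subseteq> {1..n}"
  using A_sub m_le_n by auto

lemma C_n: "C \<subseteq> {1..n}"
  using C_sub m_le_n by auto

lemmas head_of_dis_A = head_of_district[OF A_anc A_n m_in_A]
lemmas head_of_dis_C = head_of_district[OF C_ancestral C_n m_in_C]

lemma power_parent_head_C: "power_parent n D B head_C k head_A"
proof -
  have k_head_C: "k \<in> head_C"
    unfolding barren_in_ancestral[OF C_ancestral dis_in_subset] barren_def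
    using k_in_dis_C descendant_k_in_C dis_in_subset[of B C m] by blast
  define W where "W = an D head_C - {k}"
  have W_anc: "an D W = W" unfolding W_def by (rule ancestral_an_head_Diff[OF head_of_dis_C(1) k_head_C])
  have W_nondesc: "W \<subseteq> nondesc" unfolding W_def using head_of_dis_C(5) by blast
  have dis_A_W: "dis_A \<subseteq> W"
    unfolding W_def using dis_A_subset_dis_C head_of_dis_C(4) k_ham by blast
  have "dis_in B W m = dis_A"
    using dis_in_restrict[of m W nondesc B] dis_nondesc dis_A_W W_nondesc dis_in_self[OF m_in_A, of B]
    by blast
  then have "barren_in D W (dis_in B W m) = head_A"
    using barren_in_ancestral[OF W_anc dis_A_W] barren_in_ancestral[OF A_anc dis_in_subset] by simp
  then have "head_step D B head_C {k} head_A"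
    unfolding head_step_def Max_head_of_district[OF C_ancestral C_sub m_in_C] W_def[symmetric]
    using k_head_C k_ne_m by blast
  then show ?thesis
    unfolding power_parent_def using head_of_dis_A(1) head_of_dis_C(1)
      Max_head_of_district[OF C_ancestral C_sub m_in_C] Max_head_of_district[OF A_anc A_sub m_in_A]
    by simp
qed

lemma power_parent_district:
  assumes "power_parent n D B H k head_A"
  shows "an D H \<subseteq> {1..m}" and "an D (an D H - {k}) = an D H - {k}"
    and "dis_in B (an D H - {k}) m = dis_A"
proof -
  define W where "W = an D H - {k}"
  have H: "is_head n D B H" and Max_H: "Max H = m" and step: "head_step D B H {k} head_A"
    using assms Max_head_of_district[OF A_anc A_sub m_in_A] unfolding power_parent_def by auto
  have fin: "finite H" using head_finite[OF H] .
  have "H \<noteq> {}" and H_n: "H \<subseteq> {1..n}" using H unfolding is_head_def by auto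
  then have m_H: "m \<in> H" using Max_in[OF fin] Max_H by metis
  have "H \<subseteq> {1..m}" using H_n Max_ge[OF fin] Max_H by fastforce
  then show an_H: "an D H \<subseteq> {1..m}" by (rule an_interval)
  have k_H: "k \<in> H" using step unfolding head_step_def by blast
  show W_anc: "an D W = W" unfolding W_def by (rule ancestral_an_head_Diff[OF H k_H])
  have W_n: "W \<subseteq> {1..n}" unfolding W_def using an_H m_le_n by auto
  have m_W: "m \<in> W" unfolding W_def using m_H k_ne_m an_subset by blast
  have "head_A = barren_in D W (dis_in B W m)"
    using step Max_H unfolding head_step_def W_def by simp
  then show "dis_in B W m = dis_A"
    using head_of_district(2)[OF W_anc W_n m_W] head_of_dis_A(2) by simp
qed

lemma power_parent_an_subset_C:
  assumes "power_parent n D B H k head_A"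
  shows "an D H \<subseteq> C"
proof
  note W = power_parent_district[OF assms]
  fix x assume x: "x \<in> an D H"
  show "x \<in> C"
  proof (cases "x = k")
    case False
    have "(h, x) \<notin> D\<^sup>*" if h: "h \<in> ham_A" for h
    proof
      assume "(h, x) \<in> D\<^sup>*"
      then have "h \<in> an D H - {k}" using ancestralD[OF W(2)] x False by blast
      then have "h \<in> dis_A" using sib_dis_in[of h "an D H - {k}" m] h W(3) by simp
      with h show False by blast
    qed
    then show ?thesis unfolding nondesc_def using x W(1) by blast
  qed simp
qed

lemma power_parent_an_subset:
  assumes "power_parent n D B H k head_A"
  shows "an D H \<subseteq> an D head_C"
proof -
  have H: "is_head n D B H" and Max_H: "Max H = m"
    using assms Max_head_of_district[OF A_anc A_sub m_in_A] unfolding power_parent_def by auto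
  obtain v where v: "v \<in> H" "H \<subseteq> dis_in B (an D H) v" using H unfolding is_head_def by blast
  have "m \<in> H" using Max_in[OF head_finite[OF H]] v(1) Max_H by blast
  with v have "dis_in B (an D H) m = dis_in B (an D H) v" using dis_in_eq by blast
  with v have "H \<subseteq> dis_in B (an D H) m" by simp
  also have "\<dots> \<subseteq> dis_C" by (rule dis_in_mono[OF power_parent_an_subset_C[OF assms]])
  also have "\<dots> \<subseteq> an D head_C" by (rule head_of_dis_C(4))
  finally show ?thesis using an_mono an_idem by metis
qed

lemma head_A_not_maximal: "head_A \<noteq> barren_in D {1..m} (dis_in B {1..m} m)"
proof
  assume eq: "head_A = barren_in D {1..m} (dis_in B {1..m} m)"
  have "{1..m} \<subseteq> {1..n}" and "m \<in> {1..m}" using m_le_n k_interval by auto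
  then have "dis_in B {1..m} m = dis_A"
    using head_of_district(2)[OF ancestral_interval] head_of_dis_A(2) eq by metis
  moreover have "k \<in> dis_in B {1..m} m"
    using sib_dis_in[of k "{1..m}" m] k_ham k_interval calculation by simp
  ultimately show False using k_ham by blast
qed

lemma assoc_indep_head_C:
  "assoc_indep D B head_C {k} head_A =
    ({m}, with_pa D dis_C - (with_pa D dis_A \<union> {k}), with_pa D dis_A - {m})"
  unfolding assoc_indep_def head_of_dis_A(3) head_of_dis_C(3) Max_head_of_district[OF C_ancestral C_sub m_in_C]
  by simp

lemma L_tilde_member:
  assumes k_min: "\<forall>x \<in> ceil D ham_A. k \<le> x"
  shows "({m}, with_pa D dis_C - (with_pa D dis_A \<union> {k}), with_pa D dis_A - {m}) \<in> L_tilde n D B"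
proof -
  have "ham D B head_A = ham_A" unfolding ham_def head_of_dis_A(2) ..
  then have "assoc_indep D B head_C {k} head_A \<in> L_tilde_i n D B m"
    unfolding L_tilde_i_def
    by (intro UnI2 CollectI exI[of _ head_A] exI[of _ head_C] exI[of _ k] conjI refl)
      (use head_of_dis_A(1) Max_head_of_district[OF A_anc A_sub m_in_A] head_A_not_maximal k_ceil k_min
        power_parent_head_C power_parent_an_subset in auto)
  moreover have "m \<in> {1..n}" using m_le_n k_interval by auto
  ultimately show ?thesis unfolding L_tilde_def assoc_indep_head_C by blast
qed

lemma olm_stmt_C_drop_k:
  assumes at_C: "sg_derivable L (olm_stmt D B C m)"
    and at_k: "sg_derivable L (olm_stmt D B (C - {m}) k)"
  shows "sg_derivable L ({m}, C - with_pa D dis_C, with_pa D dis_C - {m, k})"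
proof -
  let ?E = "C - {m}" and ?Sk = "dis_in B (C - {m}) k"
  let ?R = "C - with_pa D dis_C" and ?Q = "with_pa D dis_C - {m, k}"
  have "?Sk \<subseteq> dis_in B C k" by (rule dis_in_mono) blast
  then have Sk_sub: "?Sk \<subseteq> dis_C" using dis_in_eq[OF k_in_dis_C] by simp
  have "?Sk \<subseteq> ?E" by (rule dis_in_subset)
  then have "m \<notin> ?Sk" and "\<forall>y \<in> ?Sk. (m, y) \<notin> D" using childless_Max[OF C_sub] by auto
  then have m_notin_Sk: "m \<notin> with_pa D ?Sk" by (rule notin_with_pa)
  have m_wp_C: "m \<in> with_pa D dis_C" by (rule with_pa_dis_in_self[OF m_in_C])
  have "sg_derivable L ({k}, ?R, ?Q)"
  proof (rule sg_weak_union_subset)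
    show "sg_derivable L ({k}, ?E - with_pa D ?Sk, with_pa D ?Sk - {k})"
      using at_k unfolding olm_stmt_ancestral[OF C_Diff_m(2,3)] .
    show "?R \<subseteq> ?E - with_pa D ?Sk" using with_pa_mono[OF Sk_sub] m_wp_C by blast
    show "with_pa D ?Sk - {k} \<subseteq> ?Q" using with_pa_mono[OF Sk_sub] m_notin_Sk by blast
    show "?Q \<subseteq> (?E - with_pa D ?Sk) \<union> (with_pa D ?Sk - {k})"
      using with_pa_subset_ancestral[OF C_ancestral dis_in_subset, of B m] by blast
  qed
  moreover have "sg_derivable L ({m}, ?R, {k} \<union> ?Q)"
  proof -
    have "with_pa D dis_C - {m} = {k} \<union> ?Q"
      using k_in_dis_C k_ne_m unfolding with_pa_def by blast
    with at_C show ?thesis unfolding olm_stmt_ancestral[OF C_ancestral m_in_C] by simp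
  qed
  ultimately show ?thesis by (rule sg_contraction_left(1)[rotated])
qed

lemma olm_stmt_from_extension:
  assumes at_C: "sg_derivable L (olm_stmt D B C m)"
    and at_k: "sg_derivable L (olm_stmt D B (C - {m}) k)"
    and tilde: "sg_derivable L ({m}, with_pa D dis_C - (with_pa D dis_A \<union> {k}), with_pa D dis_A - {m})"
  shows "sg_derivable L (olm_stmt D B A m)"
proof -
  let ?T = "with_pa D dis_C - (with_pa D dis_A \<union> {k})" and ?R = "C - with_pa D dis_C"
  have m_wp_A: "m \<in> with_pa D dis_A" by (rule with_pa_dis_in_self[OF m_in_A])
  have wp_AC: "with_pa D dis_A \<subseteq> with_pa D dis_C" by (rule with_pa_mono[OF dis_A_subset_dis_C])
  have "\<forall>y \<in> dis_A. (k, y) \<notin> D"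
    using A_subset_nondesc dis_in_subset[of B A m] nondesc_descendant[OF k_ham] by blast
  then have "k \<notin> with_pa D dis_A" using k_ham notin_with_pa by blast
  with wp_AC m_wp_A have "with_pa D dis_C - {m, k} = ?T \<union> (with_pa D dis_A - {m})" by blast
  with olm_stmt_C_drop_k[OF at_C at_k]
  have "sg_derivable L ({m}, ?T \<union> ?R, with_pa D dis_A - {m})"
    using tilde by (simp add: sg_derivable.contraction)
  moreover have "A - with_pa D dis_A \<subseteq> ?T \<union> ?R" using A_subset_nondesc k_notin_A by blast
  ultimately show ?thesis
    unfolding olm_stmt_ancestral[OF A_anc m_in_A] by (rule sg_decomposition_subset)
qed

end

context topo_mixed_graph
begin

lemma olm_stmt_at_max_without_ham:
  assumes m_le_n: "m \<le> n" and A_sub: "A \<subseteq> {1..m}" and A_anc: "an D A = A" and m_in_A: "m \<in> A"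
    and no_ham: "(sib B (dis_in B A m) - dis_in B A m) \<inter> {1..m} = {}"
  shows "sg_derivable (L_tilde n D B) (olm_stmt D B A m)"
proof -
  let ?S = "dis_in B A m"
  have "dis_in B {1..m} m \<subseteq> ?S"
  proof (rule dis_in_subset_closed)
    show "m \<in> ?S" by (rule dis_in_self[OF m_in_A])
    fix x y assume "x \<in> ?S" "y \<in> {1..m}" "(x, y) \<in> B"
    then have "y \<in> sib B ?S" using sym_B unfolding sib_def sym_def by blast
    with no_ham \<open>y \<in> {1..m}\<close> show "y \<in> ?S" by blast
  qed
  then have "dis_in B {1..m} m = ?S" using dis_in_mono[OF A_sub] by blast
  then have mb: "mb D B m {1..m} = with_pa D ?S - {m}"
    using mb_ancestral[OF ancestral_interval] by simp
  have "m \<in> {1..n}" using A_sub m_in_A m_le_n by auto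
  then have "({m}, {1..m-1} - mb D B m {1..m}, mb D B m {1..m}) \<in> L_tilde n D B"
    unfolding L_tilde_def L_tilde_i_def by blast
  then have "sg_derivable (L_tilde n D B) ({m}, {1..m-1} - (with_pa D ?S - {m}), with_pa D ?S - {m})"
    unfolding mb by (rule sg_derivable.base)
  moreover have "A - with_pa D ?S \<subseteq> {1..m-1} - (with_pa D ?S - {m})"
  proof
    fix x assume x: "x \<in> A - with_pa D ?S"
    then have "x \<in> {1..m}" and "x \<noteq> m" using A_sub with_pa_dis_in_self[OF m_in_A, of D B] by auto
    with x show "x \<in> {1..m-1} - (with_pa D ?S - {m})" by auto
  qed
  ultimately show ?thesis
    unfolding olm_stmt_ancestral[OF A_anc m_in_A] by (rule sg_decomposition_subset)
qed

lemma olm_stmt_at_max_derivable: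
  assumes m_le_n: "m \<le> n"
    and below: "\<And>A' u. A' \<subseteq> {1..m-1} \<Longrightarrow> an D A' = A' \<Longrightarrow> u \<in> A' \<Longrightarrow> \<forall>c \<in> A'. (u, c) \<notin> D \<Longrightarrow>
      sg_derivable (L_tilde n D B) (olm_stmt D B A' u)"
  shows "A \<subseteq> {1..m} \<Longrightarrow> an D A = A \<Longrightarrow> m \<in> A \<Longrightarrow>
    sg_derivable (L_tilde n D B) (olm_stmt D B A m)"
proof (induction "card ({1..m} - A)" arbitrary: A rule: less_induct)
  case less
  let ?ham = "sib B (dis_in B A m) - dis_in B A m"
  show ?case
  proof (cases "?ham \<inter> {1..m} = {}")
    case True
    with m_le_n less.prems show ?thesis by (rule olm_stmt_at_max_without_ham)
  next
    case False
    then obtain z where z: "z \<in> ?ham" "z \<in> {1..m}" by blast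
    have "?ham \<subseteq> {1..n}" using B_sub unfolding sib_def by blast
    then have "finite ?ham" by (rule finite_subset) simp
    then obtain k where k_ceil: "k \<in> ceil D ?ham" and k_min: "\<forall>x \<in> ceil D ?ham. k \<le> x"
      and "k \<le> z"
      using z(1) by (rule least_in_ceil)
    with z(2) have "k \<le> m" by simp
    interpret e: ham_extension n D B A m k
      using m_le_n less.prems k_ceil \<open>k \<le> m\<close> by unfold_locales auto
    have "sg_derivable (L_tilde n D B) (olm_stmt D B e.C m)"
      by (rule less.hyps[OF e.card_interval_Diff_C e.C_sub e.C_ancestral e.m_in_C])
    moreover have "sg_derivable (L_tilde n D B) (olm_stmt D B (e.C - {m}) k)"
      using below e.C_Diff_m by blast
    moreover have "sg_derivable (L_tilde n D B)
      ({m}, with_pa D e.dis_C - (with_pa D e.dis_A \<union> {k}), with_pa D e.dis_A - {m})"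
      using e.L_tilde_member[OF k_min] by (rule sg_derivable.base)
    ultimately show ?thesis by (rule e.olm_stmt_from_extension)
  qed
qed

lemma olm_stmt_derivable_from_L_tilde:
  "m \<le> n \<Longrightarrow> A \<subseteq> {1..m} \<Longrightarrow> an D A = A \<Longrightarrow> v \<in> A \<Longrightarrow> \<forall>c \<in> A. (v, c) \<notin> D \<Longrightarrow>
    sg_derivable (L_tilde n D B) (olm_stmt D B A v)"
proof (induction m arbitrary: A v)
  case 0
  then show ?case by simp
next
  case (Suc m)
  show ?case
  proof (cases "Suc m \<in> A")
    case False
    with Suc.prems(2) have "A \<subseteq> {1..m}" by (auto simp: le_Suc_eq)
    with Suc show ?thesis by simp
  next
    case True
    have at_max: "sg_derivable (L_tilde n D B) (olm_stmt D B A (Suc m))"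
      using olm_stmt_at_max_derivable[OF Suc.prems(1)] Suc.IH Suc.prems(1-3) True by simp
    show ?thesis
    proof (cases "v = Suc m")
      case True
      with at_max show ?thesis by simp
    next
      case False
      have "A - {Suc m} \<subseteq> {1..m}" using Suc.prems(2) by (auto simp: le_Suc_eq)
      then have "sg_derivable (L_tilde n D B) (olm_stmt D B (A - {Suc m}) v)"
        using Suc.IH ancestral_Diff_Max[OF Suc.prems(3,2)] Suc.prems(1,4,5) False by simp
      then show ?thesis
        using olm_stmt_nonmax_other_district[OF Suc.prems(3,2) True Suc.prems(4) False Suc.prems(5)]
          olm_stmt_nonmax_same_district[OF Suc.prems(3,2) True Suc.prems(4) False Suc.prems(5)]
          at_max by blast
    qed
  qed
qed

end

theorem proposition4p9:
  assumes "is_MAG n D B"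
    and "topological D"
  shows "(\<forall>t \<in> ordered_local_markov n D B. sg_derivable (L_tilde n D B) t) \<and>
         (\<forall>t \<in> L_tilde n D B. sg_derivable (ordered_local_markov n D B) t)"
proof -
  interpret topo_mixed_graph n D B
    using assms unfolding is_MAG_def topological_def by unfold_locales auto
  have "sg_derivable (L_tilde n D B) t" if "t \<in> ordered_local_markov n D B" for t
    using that olm_stmt_derivable_from_L_tilde[OF order_refl]
    unfolding ordered_local_markov_eq by blast
  then show ?thesis using L_tilde_derivable_from_olm by blast
qed

end
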